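(* Let $n\ge 2$ and let $\mathbf{p}=(\mathbf{p}_1,\dots,\mathbf{p}_N)$ be any configuration of points in $\mathbb{E}^n$. Then, as $r\to\infty$, $$\mathrm{Vol}_n\Big[\bigcap_{i=1}^N B_n(\mathbf{p}_i,r)\Big]=\delta_n r^n - M_n[\mathrm{Conv}\{\mathbf{p}_1,\dots,\mathbf{p}_N\}]\,r^{n-1}+o(r^{n-1}),$$ where $\delta_n=\mathrm{Vol}_n[B_n(0,1)]$.
   Context: $B_n(\mathbf{x},r)$ is the closed ball of radius $r$ centered at $\mathbf{x}$; $\mathrm{Vol}_n$ is $n$-dimensional volume; $\mathrm{Conv}$ is convex hull. For a compact convex $K\subset\mathbb{E}^n$, $M_n[K]=\int_{S^{n-1}}\max\{\langle x,u\rangle: x\in K\}\,d\sigma(u)$, with $\sigma$ the Lebesgue surface measure on the unit sphere $S^{n-1}$. *)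

theory Defs
  imports "HOL-Analysis.Analysis" "HOL-Library.Landau_Symbols"
begin

text \<open>Lebesgue surface measure on the unit sphere S^{n-1} of a Euclidean space,
  defined via the cone construction: sigma(A) = n * Vol_n {t u. u in A, 0 < t <= 1}.\<close>
definition sphere_measure :: "('a::euclidean_space) measure" where
  "sphere_measure =
     distr (scale_measure (of_nat DIM('a)) (restrict_space lborel (cball 0 1 - {0})))
           borel (\<lambda>x. x /\<^sub>R norm x)"

definition support_fun :: "('a::euclidean_space) set \<Rightarrow> 'a \<Rightarrow> real" where
  "support_fun K u = Sup ((\<lambda>x. x \<bullet> u) ` K)"

definition mean_support :: "('a::euclidean_space) set \<Rightarrow> real" where
  "mean_support K = integral\<^sup>L sphere_measure (support_fun K)"

end

theory Submission
  imports Defs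
begin

text \<open>
  In the direction \<open>u\<close>, the intersection extends from the origin to radius
  \<open>r - H(-u) + O(1/r)\<close>, where \<open>H\<close> is the support function of the centres.  Instead of
  polar coordinates we sort directions into finitely many level sets of \<open>H\<close> of mesh
  \<open>\<eta>\<close>; the cones over these level sets, dilated by the corresponding radii, squeeze
  the intersection from inside and outside.  Their volumes are \<open>(r - b\<^sub>j)\<^sup>n\<close> times the
  volume of the unit level cones, and expanding \<open>(r - b\<^sub>j)\<^sup>n\<close> to first order turns the
  sum into \<open>\<delta> r\<^sup>n - n r\<^sup>n\<^sup>-\<^sup>1 \<Sum> b\<^sub>j \<mu>\<^sub>j\<close>, a Riemann sum for the radial integral of \<open>H\<close>,
  which is \<open>1/n\<close> times the mean support \<open>M\<^sub>n\<close>.  Letting \<open>\<eta> \<rightarrow> 0\<close> gives the little-o.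
\<close>

section \<open>Surface integrals and support functions\<close>

lemma scale_measure_eq_density:
  assumes "0 \<le> c"
  shows "scale_measure (ennreal c) M = density M (\<lambda>_. ennreal c)"
proof (rule measure_eqI)
  fix A assume "A \<in> sets (scale_measure (ennreal c) M)"
  then show "emeasure (scale_measure (ennreal c) M) A = emeasure (density M (\<lambda>_. ennreal c)) A"
    by (simp add: emeasure_density nn_integral_cmult_indicator)
qed simp

lemma sphere_integral_as_ball_integral:
  fixes h :: "'a::euclidean_space \<Rightarrow> real"
  assumes h[measurable]: "h \<in> borel_measurable borel"
  shows "integral\<^sup>L sphere_measure h
     = real DIM('a) * (LBINT x. indicator (cball 0 1 - {0}) x * h (x /\<^sub>R norm x))"
proof -
  let ?M = "restrict_space lborel (cball (0::'a) 1 - {0})"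
  let ?S = "scale_measure (of_nat DIM('a)) ?M"
  have dens: "?S = density ?M (\<lambda>_. ennreal (real DIM('a)))"
    using scale_measure_eq_density[of "real DIM('a)" ?M]
    by (simp add: ennreal_of_nat_eq_real_of_nat)
  have normalize: "(\<lambda>x::'a. x /\<^sub>R norm x) \<in> measurable ?S borel"
    using measurable_restrict_space1[of "\<lambda>x::'a. x /\<^sub>R norm x" lborel borel]
    by (simp cong: measurable_cong_sets)
  have "integral\<^sup>L sphere_measure h = integral\<^sup>L ?S (\<lambda>x. h (x /\<^sub>R norm x))"
    unfolding sphere_measure_def by (rule integral_distr[OF normalize h])
  also have "\<dots> = integral\<^sup>L ?M (\<lambda>x. real DIM('a) *\<^sub>R h (x /\<^sub>R norm x))"
    unfolding dens by (rule integral_density) (auto intro: measurable_restrict_space1)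
  also have "\<dots> = real DIM('a) * (LBINT x. indicator (cball 0 1 - {0}) x * h (x /\<^sub>R norm x))"
    by (subst integral_restrict_space) (auto simp: mult.left_commute)
  finally show ?thesis .
qed

lemma support_fun_convex_hull_finite:
  fixes P :: "'a::euclidean_space set"
  assumes "finite P" "P \<noteq> {}"
  shows "support_fun (convex hull P) u = Max ((\<lambda>x. x \<bullet> u) ` P)"
  unfolding support_fun_def
proof (rule cSup_eq_maximum)
  let ?m = "Max ((\<lambda>x. x \<bullet> u) ` P)"
  have "?m \<in> (\<lambda>x. x \<bullet> u) ` P" by (rule Max_in) (use assms in auto)
  then show "?m \<in> (\<lambda>x. x \<bullet> u) ` (convex hull P)"
    by (meson hull_subset image_mono subsetD)
  have "convex hull P \<subseteq> {x. u \<bullet> x \<le> ?m}"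
  proof (rule hull_minimal)
    show "P \<subseteq> {x. u \<bullet> x \<le> ?m}" using assms by (auto simp: inner_commute intro!: Max_ge)
  qed (rule convex_halfspace_le)
  then show "y \<le> ?m" if "y \<in> (\<lambda>x. x \<bullet> u) ` (convex hull P)" for y
    using that by (auto simp: inner_commute)
qed


section \<open>Cones over sets of directions\<close>

definition cone_over :: "'a::euclidean_space set \<Rightarrow> real \<Rightarrow> 'a set" where
  "cone_over A s = {z. z \<noteq> 0 \<and> norm z \<le> s \<and> z /\<^sub>R norm z \<in> A}"

lemma cone_over_subset_cball: "cone_over A s \<subseteq> cball 0 s"
  by (auto simp: cone_over_def)

lemma cone_over_borel [measurable]:
  assumes [measurable]: "A \<in> sets borel"
  shows "cone_over A s \<in> sets borel"
  unfolding cone_over_def by measurable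

lemma cone_over_lmeasurable:
  assumes "A \<in> sets borel"
  shows "cone_over A s \<in> lmeasurable"
  using assms bounded_subset[OF bounded_cball cone_over_subset_cball]
  by (intro bounded_set_imp_lmeasurable) auto

lemma cone_over_reflect_scale:
  assumes "0 < s"
  shows "cone_over {u. - u \<in> A} s = (\<lambda>x. (- s) *\<^sub>R x + 0) ` cone_over A 1"
proof (intro set_eqI iffI)
  fix z assume z: "z \<in> cone_over {u. - u \<in> A} s"
  define x where "x = (- inverse s) *\<^sub>R z"
  have "z = (- s) *\<^sub>R x + 0" using assms by (simp add: x_def)
  moreover have "x \<in> cone_over A 1"
    using z assms by (auto simp: x_def cone_over_def divide_simps)
  ultimately show "z \<in> (\<lambda>x. (- s) *\<^sub>R x + 0) ` cone_over A 1" by blast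
next
  fix z assume "z \<in> (\<lambda>x. (- s) *\<^sub>R x + 0) ` cone_over A 1"
  then obtain x where "x \<in> cone_over A 1" "z = (- s) *\<^sub>R x" by auto
  then show "z \<in> cone_over {u. - u \<in> A} s"
    using assms by (auto simp: cone_over_def divide_simps mult_le_cancel_left1)
qed

lemma measure_cone_over_reflect:
  assumes "A \<in> sets borel" "0 < s"
  shows "measure lebesgue (cone_over {u. - u \<in> A} s)
       = s ^ DIM('a) * measure lebesgue (cone_over A 1 :: 'a::euclidean_space set)"
  using measure_lebesgue_affine[of "- s" 0 "cone_over A 1 :: 'a set"] assms
  by (simp add: cone_over_reflect_scale)


section \<open>The radial function of an intersection of balls\<close>

lemma norm_diff_power2_polar:
  fixes y p :: "'a::euclidean_space"
  assumes "y \<noteq> 0"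
  shows "(norm (y - p))\<^sup>2 = (norm y)\<^sup>2 - 2 * norm y * (p \<bullet> (y /\<^sub>R norm y)) + (norm p)\<^sup>2"
proof -
  have "(norm (y - p))\<^sup>2 = y \<bullet> y - 2 * (y \<bullet> p) + p \<bullet> p"
    by (simp add: power2_norm_eq_inner inner_diff_left inner_diff_right inner_commute)
  moreover have "y \<bullet> p = norm y * (p \<bullet> (y /\<^sub>R norm y))"
    using assms by (simp add: inner_commute)
  ultimately show ?thesis by (simp add: power2_norm_eq_inner)
qed

lemma inner_unit_abs_le:
  fixes p y :: "'a::euclidean_space"
  assumes "y \<noteq> 0"
  shows "\<bar>p \<bullet> (y /\<^sub>R norm y)\<bar> \<le> norm p"
  using Cauchy_Schwarz_ineq2[of p "y /\<^sub>R norm y"] assms by simp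

lemma mem_cball_radial_upper:
  fixes y p :: "'a::euclidean_space"
  assumes "y \<noteq> 0" "norm p < r" "dist y p \<le> r"
  shows "norm y \<le> r + p \<bullet> (y /\<^sub>R norm y)"
proof -
  let ?t = "norm y" and ?q = "p \<bullet> (y /\<^sub>R norm y)"
  have "?q\<^sup>2 \<le> (norm p)\<^sup>2"
    using inner_unit_abs_le[OF assms(1), of p] by (metis abs_le_square_iff abs_norm_cancel)
  moreover have "(norm (y - p))\<^sup>2 \<le> r\<^sup>2"
    using assms by (simp add: dist_norm power_mono)
  ultimately have "(?t - ?q)\<^sup>2 \<le> r\<^sup>2"
    using norm_diff_power2_polar[OF assms(1), of p] by (simp add: power2_diff)
  then have "?t - ?q \<le> r"
    by (rule power2_le_imp_le) (use assms(2) norm_ge_zero[of p] in linarith)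
  then show ?thesis by simp
qed

lemma radial_lower_imp_mem_cball:
  fixes y p :: "'a::euclidean_space"
  assumes "y \<noteq> 0" "2 * norm p \<le> r" "0 < r"
    and le: "norm y \<le> r + p \<bullet> (y /\<^sub>R norm y) - (norm p)\<^sup>2 / r"
  shows "dist y p \<le> r"
proof -
  let ?t = "norm y" and ?q = "p \<bullet> (y /\<^sub>R norm y)" and ?a = "norm p"
  let ?w = "r - ?a\<^sup>2 / r"
  have qa: "\<bar>?q\<bar> \<le> ?a" by (rule inner_unit_abs_le[OF assms(1)])
  have "?a * (2 * ?a) \<le> ?a * r" using assms(2) by (intro mult_left_mono) auto
  then have a2: "?a\<^sup>2 / r \<le> ?a / 2"
    using assms(3) by (simp add: divide_le_eq power2_eq_square mult_ac)
  then have "\<bar>?t - ?q\<bar> \<le> ?w" using le qa assms(2) norm_ge_zero[of y] by linarith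
  then have "(?t - ?q)\<^sup>2 \<le> ?w\<^sup>2" by (metis abs_ge_zero dual_order.trans power2_abs power_mono)
  also have "?w\<^sup>2 = r\<^sup>2 - 2 * ?a\<^sup>2 + (?a\<^sup>2 / r)\<^sup>2"
    using assms(3) by (simp add: power2_eq_square field_simps)
  also have "(?a\<^sup>2 / r)\<^sup>2 \<le> ?a\<^sup>2"
  proof (rule power_mono)
    show "?a\<^sup>2 / r \<le> ?a" using a2 norm_ge_zero[of p] by linarith
  qed (use assms(3) in simp)
  finally have "(?t - ?q)\<^sup>2 + ?a\<^sup>2 \<le> r\<^sup>2" by simp
  moreover have "(norm (y - p))\<^sup>2 = (?t - ?q)\<^sup>2 + ?a\<^sup>2 - ?q\<^sup>2"
    using norm_diff_power2_polar[OF assms(1), of p] by (simp add: power2_diff)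
  ultimately have "(norm (y - p))\<^sup>2 \<le> r\<^sup>2" using zero_le_power2[of ?q] by linarith
  then have "norm (y - p) \<le> r" by (rule power2_le_imp_le) (use assms(3) in simp)
  then show ?thesis by (simp add: dist_norm)
qed

lemma ball_intersection_radial_bounds:
  fixes p :: "'b \<Rightarrow> 'a::euclidean_space"
  assumes "finite I" "I \<noteq> {}" and p_le: "\<And>i. i \<in> I \<Longrightarrow> norm (p i) \<le> R"
    and r: "2 * R \<le> r" "0 < r" and z: "z \<noteq> 0"
  defines "H \<equiv> \<lambda>w. Max ((\<lambda>i. p i \<bullet> w) ` I)"
  shows "z \<in> (\<Inter>i\<in>I. cball (p i) r) \<Longrightarrow> norm z \<le> r - H (- (z /\<^sub>R norm z))"
    and "norm z \<le> r - H (- (z /\<^sub>R norm z)) - R\<^sup>2 / r \<Longrightarrow> z \<in> (\<Inter>i\<in>I. cball (p i) r)"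
proof -
  let ?u = "z /\<^sub>R norm z"
  assume "z \<in> (\<Inter>i\<in>I. cball (p i) r)"
  have "H (- ?u) \<in> (\<lambda>i. p i \<bullet> (- ?u)) ` I"
    unfolding H_def by (rule Max_in) (use assms(1,2) in auto)
  then obtain k where k: "k \<in> I" "H (- ?u) = p k \<bullet> (- ?u)" by auto
  have "dist z (p k) \<le> r" using \<open>z \<in> _\<close> k(1) by (auto simp: dist_commute)
  moreover have "norm (p k) < r" using p_le[OF k(1)] r by linarith
  ultimately show "norm z \<le> r - H (- ?u)"
    using mem_cball_radial_upper[OF z] k(2) by force
next
  let ?u = "z /\<^sub>R norm z"
  assume le: "norm z \<le> r - H (- ?u) - R\<^sup>2 / r"
  show "z \<in> (\<Inter>i\<in>I. cball (p i) r)"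
  proof
    fix i assume i: "i \<in> I"
    have "p i \<bullet> (- ?u) \<le> H (- ?u)" unfolding H_def using i assms(1) by (intro Max_ge) auto
    moreover have "(norm (p i))\<^sup>2 / r \<le> R\<^sup>2 / r"
      using p_le[OF i] r(2) by (intro divide_right_mono power_mono) auto
    ultimately have "norm z \<le> r + p i \<bullet> ?u - (norm (p i))\<^sup>2 / r" using le by simp
    moreover have "2 * norm (p i) \<le> r" using p_le[OF i] r by linarith
    ultimately have "dist z (p i) \<le> r" by (intro radial_lower_imp_mem_cball[OF z _ r(2)])
    then show "z \<in> cball (p i) r" by (simp add: dist_commute)
  qed
qed


lemma power_diff_first_order:
  fixes r b :: real
  assumes "2 \<le> n" "1 \<le> r"
  shows "\<bar>(r - b) ^ n - (r ^ n - n * b * r ^ (n - 1))\<bar> \<le> r ^ (n - 2) * (1 + \<bar>b\<bar>) ^ n"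
proof -
  define f where "f k = real (n choose k) * (- b) ^ k * r ^ (n - k)" for k
  have "(r - b) ^ n = (\<Sum>k\<le>n. f k)"
    unfolding f_def using binomial_ring[of "- b" r n] by (simp add: mult_ac)
  also have "{..n} = {0, 1} \<union> {2..n}" using assms by auto
  also have "sum f ({0, 1} \<union> {2..n}) = f 0 + f 1 + sum f {2..n}"
    by (subst sum.union_disjoint) auto
  also have "f 0 + f 1 = r ^ n - n * b * r ^ (n - 1)" by (simp add: f_def)
  finally have eq: "(r - b) ^ n - (r ^ n - n * b * r ^ (n - 1)) = sum f {2..n}" by simp
  have "\<bar>sum f {2..n}\<bar> \<le> (\<Sum>k\<in>{2..n}. r ^ (n - 2) * (real (n choose k) * \<bar>b\<bar> ^ k * 1 ^ (n - k)))"
  proof (rule order_trans[OF sum_abs sum_mono])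
    fix k assume k: "k \<in> {2..n}"
    have "\<bar>r\<bar> ^ (n - k) \<le> r ^ (n - 2)"
      using k assms by (subst abs_of_nonneg) (auto intro: power_increasing)
    then show "\<bar>f k\<bar> \<le> r ^ (n - 2) * (real (n choose k) * \<bar>b\<bar> ^ k * 1 ^ (n - k))"
      by (simp add: f_def abs_mult power_abs mult.commute mult_right_mono)
  qed
  also have "\<dots> \<le> r ^ (n - 2) * (\<Sum>k\<le>n. real (n choose k) * \<bar>b\<bar> ^ k * 1 ^ (n - k))"
    unfolding sum_distrib_left[symmetric] using assms by (intro mult_left_mono sum_mono2) auto
  also have "(\<Sum>k\<le>n. real (n choose k) * \<bar>b\<bar> ^ k * 1 ^ (n - k)) = (\<bar>b\<bar> + 1) ^ n"
    by (simp add: binomial_ring)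
  finally show ?thesis using eq by (simp add: add.commute)
qed

lemma weighted_power_sum_expansion:
  fixes b \<mu> :: "'i \<Rightarrow> real"
  assumes "2 \<le> n" "1 \<le> r" and \<mu>: "\<And>j. j \<in> J \<Longrightarrow> 0 \<le> \<mu> j"
    and b: "\<And>j. j \<in> J \<Longrightarrow> \<bar>b j\<bar> \<le> B"
  shows "\<bar>(\<Sum>j\<in>J. (r - b j) ^ n * \<mu> j)
            - ((\<Sum>j\<in>J. \<mu> j) * r ^ n - n * r ^ (n - 1) * (\<Sum>j\<in>J. b j * \<mu> j))\<bar>
         \<le> (1 + B) ^ n * (\<Sum>j\<in>J. \<mu> j) * r ^ (n - 2)"
proof -
  let ?e = "\<lambda>j. (r - b j) ^ n - (r ^ n - n * b j * r ^ (n - 1))"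
  have "(\<Sum>j\<in>J. (r - b j) ^ n * \<mu> j)
            - ((\<Sum>j\<in>J. \<mu> j) * r ^ n - n * r ^ (n - 1) * (\<Sum>j\<in>J. b j * \<mu> j))
        = (\<Sum>j\<in>J. ?e j * \<mu> j)"
    by (simp add: sum_subtractf sum.distrib sum_distrib_left sum_distrib_right algebra_simps)
  also have "\<bar>\<dots>\<bar> \<le> (\<Sum>j\<in>J. r ^ (n - 2) * (1 + B) ^ n * \<mu> j)"
  proof (rule order_trans[OF sum_abs sum_mono])
    fix j assume j: "j \<in> J"
    have "r ^ (n - 2) * (1 + \<bar>b j\<bar>) ^ n \<le> r ^ (n - 2) * (1 + B) ^ n"
      using b[OF j] assms(2) by (intro mult_left_mono power_mono) auto
    then have "\<bar>?e j\<bar> \<le> r ^ (n - 2) * (1 + B) ^ n"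
      using power_diff_first_order[OF assms(1,2), of "b j"] by linarith
    then show "\<bar>?e j * \<mu> j\<bar> \<le> r ^ (n - 2) * (1 + B) ^ n * \<mu> j"
      using \<mu>[OF j] by (simp add: abs_mult mult_right_mono)
  qed
  also have "\<dots> = (1 + B) ^ n * (\<Sum>j\<in>J. \<mu> j) * r ^ (n - 2)"
    by (simp add: sum_distrib_left sum_distrib_right mult_ac)
  finally show ?thesis .
qed


section \<open>Level cones of a bounded function on the sphere\<close>

text \<open>The range \<open>[-R, R]\<close> is cut into the \<open>m\<close> intervals \<open>[L j, L j + \<eta>)\<close>; the level cone
  \<open>C j\<close> consists of the points of the punctured unit ball whose direction has its
  \<open>H\<close>-value in the \<open>j\<close>-th interval.  These cones replace polar coordinates: they
  partition the ball, approximate the radial integral of \<open>H\<close> by a Riemann sum, and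
  their (reflected) dilates approximate star-shaped sets with radial function close to
  \<open>r - H(-u)\<close>.\<close>
locale level_cones =
  fixes H :: "'a::euclidean_space \<Rightarrow> real" and R \<eta> :: real
  assumes H_borel [measurable]: "H \<in> borel_measurable borel"
    and H_bound: "\<And>u. norm u = 1 \<Longrightarrow> \<bar>H u\<bar> \<le> R"
    and mesh_pos: "0 < \<eta>"
begin

definition m :: nat where "m = nat \<lceil>2 * R / \<eta>\<rceil> + 1"

definition L :: "nat \<Rightarrow> real" where "L j = - R + real j * \<eta>"

definition level :: "nat \<Rightarrow> 'a set" where "level j = {u. L j \<le> H u \<and> H u < L j + \<eta>}"

definition C :: "nat \<Rightarrow> 'a set" where "C j = cone_over (level j) 1"

definition \<mu> :: "nat \<Rightarrow> real" where "\<mu> j = measure lebesgue (C j)"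

text \<open>The radial integral of \<open>H\<close> over the unit ball (\<open>1/n\<close> times its sphere integral).\<close>
definition radial_integral :: real where
  "radial_integral = (LBINT x. indicator (cball 0 1 - {0}) x * H (x /\<^sub>R norm x))"

lemma R_nonneg: "0 \<le> R"
proof -
  obtain b :: 'a where "b \<in> Basis" using nonempty_Basis by blast
  then show ?thesis using H_bound[of b] by auto
qed

lemma L_range: "j < m \<Longrightarrow> - R \<le> L j \<and> L j \<le> R + \<eta>"
proof -
  assume "j < m"
  moreover have "0 \<le> 2 * R / \<eta>" using R_nonneg mesh_pos by simp
  ultimately have "int j \<le> \<lceil>2 * R / \<eta>\<rceil>" by (simp add: m_def less_Suc_eq_le le_nat_iff)
  then have "real j \<le> of_int \<lceil>2 * R / \<eta>\<rceil>" by (metis of_int_le_iff of_int_of_nat_eq)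
  also have "\<dots> < 2 * R / \<eta> + 1" by linarith
  finally have "real j * \<eta> \<le> (2 * R / \<eta> + 1) * \<eta>"
    using mesh_pos by (intro mult_right_mono) auto
  also have "\<dots> = 2 * R + \<eta>" using mesh_pos by (simp add: field_simps)
  finally show ?thesis using mesh_pos by (simp add: L_def)
qed

lemma level_borel [measurable]: "level j \<in> sets borel"
  unfolding level_def by measurable

lemma C_borel [measurable]: "C j \<in> sets borel"
  unfolding C_def by measurable

lemma C_lmeasurable: "C j \<in> lmeasurable"
  unfolding C_def by (rule cone_over_lmeasurable) measurable

lemma level_unique: "u \<in> level i \<Longrightarrow> u \<in> level j \<Longrightarrow> i = j"
proof -
  assume "u \<in> level i" "u \<in> level j"
  then have "real i * \<eta> < (real j + 1) * \<eta>" "real j * \<eta> < (real i + 1) * \<eta>"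
    by (auto simp: level_def L_def algebra_simps)
  then have "real i < real j + 1" "real j < real i + 1"
    using mesh_pos mult_less_cancel_right_pos by blast+
  then show "i = j" by linarith
qed

lemma level_exists:
  assumes "norm u = 1"
  shows "\<exists>j<m. u \<in> level j"
proof -
  define j where "j = nat \<lfloor>(H u + R) / \<eta>\<rfloor>"
  have bound: "- R \<le> H u" "H u \<le> R" using H_bound[OF assms] by auto
  then have "0 \<le> (H u + R) / \<eta>" using mesh_pos by simp
  then have j: "real j \<le> (H u + R) / \<eta>" "(H u + R) / \<eta> < real j + 1"
    unfolding j_def by linarith+
  then have "real j * \<eta> \<le> H u + R" "H u + R < real j * \<eta> + \<eta>"
    using mesh_pos by (simp_all add: field_simps)
  then have "u \<in> level j" by (simp add: level_def L_def)
  moreover have "(H u + R) / \<eta> \<le> 2 * R / \<eta>"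
    using bound mesh_pos by (simp add: divide_right_mono)
  then have "j < m" unfolding j_def m_def by linarith
  ultimately show ?thesis by blast
qed

lemma C_disjoint: "disjoint_family C"
  unfolding disjoint_family_on_def C_def cone_over_def by (auto dest: level_unique)

lemma C_Union: "(\<Union>j<m. C j) = cball 0 1 - {0}"
proof
  show "cball 0 1 - {0} \<subseteq> (\<Union>j<m. C j)"
  proof
    fix x :: 'a assume x: "x \<in> cball 0 1 - {0}"
    then obtain j where "j < m" "x /\<^sub>R norm x \<in> level j" using level_exists[of "x /\<^sub>R norm x"] by auto
    then show "x \<in> (\<Union>j<m. C j)" using x by (auto simp: C_def cone_over_def)
  qed
qed (auto simp: C_def cone_over_def)

lemma measure_finite_disjoint_Union:
  assumes "\<And>j. j < m \<Longrightarrow> A j \<in> lmeasurable" "disjoint_family_on A {..<m}"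
  shows "measure lebesgue (\<Union>j<m. A j) = (\<Sum>j<m. measure lebesgue (A j))"
proof (rule measure_finite_Union)
  show "emeasure lebesgue (A j) \<noteq> \<infinity>" if "j \<in> {..<m}" for j
    using fmeasurableD2[OF assms(1)] that unfolding infinity_ennreal_def by blast
qed (use assms in auto)

lemma sum_\<mu>: "(\<Sum>j<m. \<mu> j) = measure lebesgue (cball (0::'a) 1)"
proof -
  have "(\<Sum>j<m. \<mu> j) = measure lebesgue (cball (0::'a) 1 - {0})"
    unfolding \<mu>_def C_Union[symmetric] using C_lmeasurable C_disjoint
    by (intro measure_finite_disjoint_Union[symmetric]) (auto simp: disjoint_family_on_def)
  also have "\<dots> = measure lebesgue (cball (0::'a) 1)"
    by (rule measure_Diff_null_set) (auto intro: null_sets_completionI finite_imp_null_set_lborel)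
  finally show ?thesis .
qed


lemma C_finite_lborel: "emeasure lborel (C j) < \<infinity>"
  using emeasure_mono[of "C j" "cball 0 1" lborel] cone_over_subset_cball[of "level j" 1]
    emeasure_lborel_cball_finite[of "0::'a" 1]
  by (auto simp: C_def)

lemma step_function_at:
  fixes a :: "nat \<Rightarrow> real"
  assumes "j < m" "x \<in> C j"
  shows "(\<Sum>k<m. a k * indicator (C k) x) = a j"
proof -
  have "x \<notin> C k" if "k \<noteq> j" for k
    using C_disjoint assms(2) that unfolding disjoint_family_on_def by blast
  then have "a k * indicator (C k) x = (if k = j then a j else 0)" for k
    using assms(2) by auto
  then show ?thesis using assms(1) by simp
qed

lemma step_function_integral:
  fixes a :: "nat \<Rightarrow> real"
  shows "integrable lborel (\<lambda>x. \<Sum>j<m. a j * indicator (C j) x)"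
    and "(LBINT x. \<Sum>j<m. a j * indicator (C j) x) = (\<Sum>j<m. a j * \<mu> j)"
proof -
  have ind: "integrable lborel (indicator (C j) :: 'a \<Rightarrow> real)" for j
    using C_finite_lborel by (intro integrable_real_indicator) auto
  show "integrable lborel (\<lambda>x. \<Sum>j<m. a j * indicator (C j) x)"
    by (intro Bochner_Integration.integrable_sum) (simp add: ind)
  show "(LBINT x. \<Sum>j<m. a j * indicator (C j) x) = (\<Sum>j<m. a j * \<mu> j)"
    by (subst Bochner_Integration.integral_sum) (use ind in \<open>auto simp: \<mu>_def\<close>)
qed

lemma radial_integrand_sandwich:
  fixes x :: 'a
  defines "g \<equiv> indicator (cball 0 1 - {0}) x * H (x /\<^sub>R norm x)"
  shows "(\<Sum>j<m. L j * indicator (C j) x) \<le> g"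
    and "g \<le> (\<Sum>j<m. (L j + \<eta>) * indicator (C j) x)"
proof -
  have "(\<Sum>j<m. L j * indicator (C j) x) \<le> g \<and> g \<le> (\<Sum>j<m. (L j + \<eta>) * indicator (C j) x)"
  proof (cases "x \<in> cball 0 1 - {0}")
    case True
    then obtain j where j: "j < m" "x \<in> C j" using C_Union by blast
    moreover have "x /\<^sub>R norm x \<in> level j" using j by (simp add: C_def cone_over_def)
    moreover have "g = H (x /\<^sub>R norm x)" using True by (simp add: g_def)
    ultimately show ?thesis unfolding step_function_at[OF j] by (simp add: level_def)
  next
    case False
    then have "x \<notin> C j" for j by (auto simp: C_def cone_over_def)
    then show ?thesis using False by (simp add: g_def)
  qed
  then show "(\<Sum>j<m. L j * indicator (C j) x) \<le> g" "g \<le> (\<Sum>j<m. (L j + \<eta>) * indicator (C j) x)"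
    by auto
qed

lemma radial_integrand_integrable:
  "integrable lborel (\<lambda>x::'a. indicator (cball 0 1 - {0}) x * H (x /\<^sub>R norm x))"
proof (rule Bochner_Integration.integrable_bound)
  show "integrable lborel (\<lambda>x::'a. R * indicator (cball 0 1) x)"
    using emeasure_lborel_cball_finite[of "0::'a" 1]
    by (intro integrable_mult_right integrable_real_indicator) auto
  show "AE x in lborel. norm (indicator (cball 0 1 - {0}) x * H (x /\<^sub>R norm x))
          \<le> norm (R * indicator (cball (0::'a) 1) x)"
    using H_bound R_nonneg by (intro AE_I2) (auto simp: indicator_def)
  have [measurable]: "cball (0::'a) 1 - {0} \<in> sets borel" by measurable
  show "(\<lambda>x::'a. indicator (cball 0 1 - {0}) x * H (x /\<^sub>R norm x)) \<in> borel_measurable lborel"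
    by simp
qed

lemma radial_integral_bounds:
  shows "(\<Sum>j<m. L j * \<mu> j) \<le> radial_integral"
    and "radial_integral \<le> (\<Sum>j<m. L j * \<mu> j) + \<eta> * measure lebesgue (cball (0::'a) 1)"
proof -
  show "(\<Sum>j<m. L j * \<mu> j) \<le> radial_integral"
    unfolding radial_integral_def step_function_integral(2)[symmetric]
    by (intro integral_mono step_function_integral(1) radial_integrand_integrable
        radial_integrand_sandwich(1))
  have "radial_integral \<le> (\<Sum>j<m. (L j + \<eta>) * \<mu> j)"
    unfolding radial_integral_def step_function_integral(2)[symmetric]
    by (intro integral_mono step_function_integral(1) radial_integrand_integrable
        radial_integrand_sandwich(2))
  also have "\<dots> = (\<Sum>j<m. L j * \<mu> j) + \<eta> * measure lebesgue (cball (0::'a) 1)"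
    by (simp add: distrib_right sum.distrib sum_distrib_left[symmetric] sum_\<mu>)
  finally show "radial_integral \<le> (\<Sum>j<m. L j * \<mu> j) + \<eta> * measure lebesgue (cball (0::'a) 1)" .
qed


definition D :: "nat \<Rightarrow> real \<Rightarrow> 'a set" where "D j s = cone_over {u. - u \<in> level j} s"

lemma D_lmeasurable: "D j s \<in> lmeasurable"
  unfolding D_def by (rule cone_over_lmeasurable) measurable

lemma measure_D: "0 < s \<Longrightarrow> measure lebesgue (D j s) = s ^ DIM('a) * \<mu> j"
  unfolding D_def \<mu>_def C_def by (rule measure_cone_over_reflect) auto

lemma measure_D_Union:
  assumes "\<And>j. j < m \<Longrightarrow> 0 < f j"
  shows "measure lebesgue (\<Union>j<m. D j (f j)) = (\<Sum>j<m. f j ^ DIM('a) * \<mu> j)"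
proof -
  have "disjoint_family_on (\<lambda>j. D j (f j)) {..<m}"
    unfolding disjoint_family_on_def D_def cone_over_def by (auto dest: level_unique)
  then have "measure lebesgue (\<Union>j<m. D j (f j)) = (\<Sum>j<m. measure lebesgue (D j (f j)))"
    by (intro measure_finite_disjoint_Union D_lmeasurable)
  also have "\<dots> = (\<Sum>j<m. f j ^ DIM('a) * \<mu> j)"
    using assms by (intro sum.cong) (auto simp: measure_D)
  finally show ?thesis .
qed

lemma volume_lower_bound:
  assumes S: "S \<in> lmeasurable" and r: "R + 2 * \<eta> + c < r"
    and inner: "\<And>z. z \<noteq> 0 \<Longrightarrow> norm z \<le> r - H (- (z /\<^sub>R norm z)) - c \<Longrightarrow> z \<in> S"
  shows "(\<Sum>j<m. (r - (L j + \<eta> + c)) ^ DIM('a) * \<mu> j) \<le> measure lebesgue S"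
proof -
  let ?f = "\<lambda>j. r - (L j + \<eta> + c)"
  have "(\<Union>j<m. D j (?f j)) \<subseteq> S"
  proof (intro UN_least subsetI)
    fix j z assume "z \<in> D j (?f j)"
    then show "z \<in> S" using inner by (force simp: D_def cone_over_def level_def)
  qed
  then have "measure lebesgue (\<Union>j<m. D j (?f j)) \<le> measure lebesgue S"
    using D_lmeasurable S by (intro measure_mono_fmeasurable) auto
  moreover have "0 < ?f j" if "j < m" for j using L_range[OF that] r by linarith
  ultimately show ?thesis by (simp add: measure_D_Union)
qed

lemma volume_upper_bound:
  assumes S: "S \<in> lmeasurable" and r: "R + \<eta> < r"
    and outer: "\<And>z. z \<in> S \<Longrightarrow> z \<noteq> 0 \<Longrightarrow> norm z \<le> r - H (- (z /\<^sub>R norm z))"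
  shows "measure lebesgue S \<le> (\<Sum>j<m. (r - L j) ^ DIM('a) * \<mu> j)"
proof -
  let ?f = "\<lambda>j. r - L j"
  have "S - {0} \<subseteq> (\<Union>j<m. D j (?f j))"
  proof
    fix z assume z: "z \<in> S - {0}"
    then obtain j where "j < m" "- (z /\<^sub>R norm z) \<in> level j"
      using level_exists[of "- (z /\<^sub>R norm z)"] by auto
    then show "z \<in> (\<Union>j<m. D j (?f j))"
      using outer[of z] z by (force simp: D_def cone_over_def level_def)
  qed
  then have "measure lebesgue (S - {0}) \<le> measure lebesgue (\<Union>j<m. D j (?f j))"
    using D_lmeasurable S by (intro measure_mono_fmeasurable fmeasurable.finite_UN) auto
  moreover have "measure lebesgue (S - {0}) = measure lebesgue S"
    using S by (intro measure_Diff_null_set) (auto intro: null_sets_completionI finite_imp_null_set_lborel)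
  moreover have "0 < ?f j" if "j < m" for j using L_range[OF that] r by linarith
  ultimately show ?thesis by (simp add: measure_D_Union)
qed


lemma volume_expansion:
  fixes S :: "'a set" and r c :: real
  defines "n \<equiv> DIM('a)" and "\<delta> \<equiv> measure lebesgue (cball (0::'a) 1)"
  assumes n: "2 \<le> n" and r: "1 \<le> r" "R + 2 * \<eta> + c < r" and c: "0 \<le> c"
    and S: "S \<in> lmeasurable"
    and inner: "\<And>z. z \<noteq> 0 \<Longrightarrow> norm z \<le> r - H (- (z /\<^sub>R norm z)) - c \<Longrightarrow> z \<in> S"
    and outer: "\<And>z. z \<in> S \<Longrightarrow> z \<noteq> 0 \<Longrightarrow> norm z \<le> r - H (- (z /\<^sub>R norm z))"
  shows "\<bar>measure lebesgue S - (\<delta> * r ^ n - n * radial_integral * r ^ (n - 1))\<bar>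
         \<le> n * (\<eta> + c) * \<delta> * r ^ (n - 1) + (1 + R + 2 * \<eta> + c) ^ n * \<delta> * r ^ (n - 2)"
proof -
  define B where "B = R + 2 * \<eta> + c"
  define A where "A = (\<Sum>j<m. L j * \<mu> j)"
  define K where "K = (1 + B) ^ n * \<delta> * r ^ (n - 2)"
  define T where "T = n * r ^ (n - 1)"
  have \<mu>: "0 \<le> \<mu> j" for j by (simp add: \<mu>_def)
  have total: "(\<Sum>j<m. \<mu> j) = \<delta>" using sum_\<mu> by (simp add: \<delta>_def)
  have LB: "\<bar>L j\<bar> \<le> B" "\<bar>L j + \<eta> + c\<bar> \<le> B" if "j < m" for j
    using L_range[OF that] R_nonneg mesh_pos c by (auto simp: B_def)
  have "(\<Sum>j<m. (L j + \<eta> + c) * \<mu> j) = A + (\<eta> + c) * \<delta>"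
    by (simp add: A_def distrib_right sum.distrib sum_distrib_left[symmetric] total)
  then have "\<delta> * r ^ n - T * (A + (\<eta> + c) * \<delta>) - K \<le> (\<Sum>j<m. (r - (L j + \<eta> + c)) ^ n * \<mu> j)"
    using weighted_power_sum_expansion[OF n r(1), of "{..<m}" \<mu> "\<lambda>j. L j + \<eta> + c" B] \<mu> LB(2)
    by (simp add: total K_def T_def mult_ac abs_le_iff)
  also have "\<dots> \<le> measure lebesgue S"
    unfolding n_def by (rule volume_lower_bound[OF S r(2) inner])
  finally have lower: "\<delta> * r ^ n - T * (A + (\<eta> + c) * \<delta>) - K \<le> measure lebesgue S" .
  have "measure lebesgue S \<le> (\<Sum>j<m. (r - L j) ^ n * \<mu> j)"
    unfolding n_def using mesh_pos c r(2) by (intro volume_upper_bound[OF S _ outer]) auto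
  also have "\<dots> \<le> \<delta> * r ^ n - T * A + K"
    using weighted_power_sum_expansion[OF n r(1), of "{..<m}" \<mu> L B] \<mu> LB(1)
    by (simp add: total A_def K_def T_def mult_ac abs_le_iff)
  finally have upper: "measure lebesgue S \<le> \<delta> * r ^ n - T * A + K" .
  have T0: "0 \<le> T" using r(1) by (simp add: T_def)
  have "T * A \<le> T * radial_integral"
    using radial_integral_bounds(1) T0 by (simp add: A_def mult_left_mono)
  moreover have "T * (radial_integral - \<eta> * \<delta>) \<le> T * A"
    using radial_integral_bounds(2) T0 by (simp add: A_def \<delta>_def mult_left_mono)
  moreover have "0 \<le> T * c * \<delta>" using T0 c by (simp add: \<delta>_def)
  ultimately show ?thesis
    using lower upper by (simp add: T_def K_def B_def abs_le_iff algebra_simps)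
qed

end


section \<open>Volume of an intersection of balls\<close>

lemma Max_inner_abs_le:
  fixes p :: "'b \<Rightarrow> 'a::euclidean_space"
  assumes "finite I" "I \<noteq> {}" "\<And>i. i \<in> I \<Longrightarrow> norm (p i) \<le> R" "norm w = 1"
  shows "\<bar>Max ((\<lambda>i. p i \<bullet> w) ` I)\<bar> \<le> R"
proof -
  have "Max ((\<lambda>i. p i \<bullet> w) ` I) \<in> (\<lambda>i. p i \<bullet> w) ` I"
    by (rule Max_in) (use assms(1,2) in auto)
  then obtain k where "k \<in> I" "Max ((\<lambda>i. p i \<bullet> w) ` I) = p k \<bullet> w" by auto
  then show ?thesis
    using Cauchy_Schwarz_ineq2[of "p k" w] assms(3)[of k] assms(4) by simp
qed

lemma Max_inner_borel [measurable]:
  fixes p :: "'b \<Rightarrow> 'a::euclidean_space"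
  assumes "finite I"
  shows "(\<lambda>w. Max ((\<lambda>i. p i \<bullet> w) ` I)) \<in> borel_measurable borel"
proof -
  have [measurable]: "(\<lambda>w. p i \<bullet> w) \<in> borel_measurable borel" for i
    by (intro borel_measurable_continuous_onI continuous_intros)
  show ?thesis using assms by measurable
qed

lemma ball_intersection_lmeasurable:
  fixes p :: "'b \<Rightarrow> 'a::euclidean_space"
  assumes "I \<noteq> {}"
  shows "(\<Inter>i\<in>I. cball (p i) r) \<in> lmeasurable"
proof (rule lmeasurable_compact)
  obtain k where "k \<in> I" using assms by blast
  then have "bounded (\<Inter>i\<in>I. cball (p i) r)" by (intro bounded_subset[OF bounded_cball]) auto
  moreover have "closed (\<Inter>i\<in>I. cball (p i) r)" by (intro closed_INT) auto
  ultimately show "compact (\<Inter>i\<in>I. cball (p i) r)" by (simp add: compact_eq_bounded_closed)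
qed

text \<open>The error \<open>R\<^sup>2/r\<close> in the radial
  function only contributes to the \<open>O(r\<^sup>n\<^sup>-\<^sup>2)\<close> term.\<close>
lemma ball_intersection_volume_estimate:
  fixes p :: "'b \<Rightarrow> 'a::euclidean_space" and I :: "'b set" and \<eta> :: real
  defines "n \<equiv> DIM('a)" and "\<delta> \<equiv> measure lebesgue (cball (0::'a) 1)"
    and "H \<equiv> \<lambda>w. Max ((\<lambda>i. p i \<bullet> w) ` I)"
  assumes n: "2 \<le> n" and I: "finite I" "I \<noteq> {}" and \<eta>: "0 < \<eta>"
  shows "\<exists>r0 E. \<forall>r\<ge>r0. \<bar>measure lebesgue (\<Inter>i\<in>I. cball (p i) r)
            - (\<delta> * r ^ n - n * (LBINT x. indicator (cball 0 1 - {0}) x * H (x /\<^sub>R norm x)) * r ^ (n - 1))\<bar>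
           \<le> n * \<eta> * \<delta> * r ^ (n - 1) + E * r ^ (n - 2)"
proof -
  define R where "R = (\<Sum>i\<in>I. norm (p i))"
  have p_le: "norm (p i) \<le> R" if "i \<in> I" for i
    unfolding R_def using I(1) that by (intro member_le_sum) auto
  interpret level_cones H R \<eta>
  proof
    show "H \<in> borel_measurable borel" unfolding H_def using I(1) by (rule Max_inner_borel)
  qed (use Max_inner_abs_le[OF I p_le] \<eta> in \<open>auto simp: H_def\<close>)
  define S where "S r = (\<Inter>i\<in>I. cball (p i) r)" for r
  have S: "S r \<in> lmeasurable" for r
    unfolding S_def using I(2) by (rule ball_intersection_lmeasurable)
  define E where "E = n * R\<^sup>2 * \<delta> + (1 + R + 2 * \<eta> + R\<^sup>2) ^ n * \<delta>"
  have "\<bar>measure lebesgue (S r) - (\<delta> * r ^ n - n * radial_integral * r ^ (n - 1))\<bar>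
        \<le> n * \<eta> * \<delta> * r ^ (n - 1) + E * r ^ (n - 2)"
    if r: "2 * R + 2 * \<eta> + R\<^sup>2 + 1 \<le> r" for r
  proof -
    define c where "c = R\<^sup>2 / r"
    have r1: "1 \<le> r" and r2R: "2 * R \<le> r"
      using r R_nonneg mesh_pos zero_le_power2[of R] by linarith+
    have c: "0 \<le> c" "c \<le> R\<^sup>2" "c * r = R\<^sup>2"
      using r1 by (auto simp: c_def divide_le_eq mult_le_cancel_left1)
    have rc: "R + 2 * \<eta> + c < r" using r c(2) R_nonneg by linarith
    have bounds: "\<bar>measure lebesgue (S r) - (\<delta> * r ^ n - n * radial_integral * r ^ (n - 1))\<bar>
        \<le> n * (\<eta> + c) * \<delta> * r ^ (n - 1) + (1 + R + 2 * \<eta> + c) ^ n * \<delta> * r ^ (n - 2)"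
      unfolding n_def \<delta>_def
    proof (rule volume_expansion[OF _ r1 rc c(1) S])
      show "norm z \<le> r - H (- (z /\<^sub>R norm z))" if "z \<in> S r" "z \<noteq> 0" for z
        using ball_intersection_radial_bounds(1)[OF I p_le r2R _ that(2)] r1 that(1)
        by (simp add: S_def H_def)
      show "z \<in> S r" if "z \<noteq> 0" "norm z \<le> r - H (- (z /\<^sub>R norm z)) - c" for z
        using ball_intersection_radial_bounds(2)[OF I p_le r2R _ that(1)] r1 that(2)
        by (simp add: S_def H_def c_def)
    qed (use n in \<open>simp add: n_def\<close>)
    have "r ^ (n - 1) = r * r ^ (n - 2)" using n by (metis Suc_diff_Suc Suc_1 Suc_le_lessD diff_Suc_1 power_Suc)
    then have "n * c * \<delta> * r ^ (n - 1) = n * R\<^sup>2 * \<delta> * r ^ (n - 2)" using c(3) by (simp add: mult_ac)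
    then have "n * (\<eta> + c) * \<delta> * r ^ (n - 1) = n * \<eta> * \<delta> * r ^ (n - 1) + n * R\<^sup>2 * \<delta> * r ^ (n - 2)"
      by (simp add: algebra_simps)
    moreover have "E * r ^ (n - 2) = n * R\<^sup>2 * \<delta> * r ^ (n - 2) + (1 + R + 2 * \<eta> + R\<^sup>2) ^ n * \<delta> * r ^ (n - 2)"
      by (simp add: E_def algebra_simps)
    moreover have "(1 + R + 2 * \<eta> + c) ^ n * \<delta> * r ^ (n - 2) \<le> (1 + R + 2 * \<eta> + R\<^sup>2) ^ n * \<delta> * r ^ (n - 2)"
      using c R_nonneg mesh_pos r1 by (intro mult_right_mono power_mono) (auto simp: \<delta>_def)
    ultimately show ?thesis using bounds by linarith
  qed
  then show ?thesis unfolding S_def radial_integral_def by blast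
qed

lemma smallo_of_uniform_bounds:
  fixes f :: "real \<Rightarrow> real" and A :: real and k :: nat
  assumes k: "1 \<le> k" and A: "0 \<le> A"
    and bound: "\<And>\<eta>. 0 < \<eta> \<Longrightarrow> \<exists>r0 E. \<forall>r\<ge>r0. \<bar>f r\<bar> \<le> A * \<eta> * r ^ k + E * r ^ (k - 1)"
  shows "f \<in> o[at_top](\<lambda>r. r ^ k)"
proof (rule landau_o.smallI)
  fix c :: real assume c: "0 < c"
  define \<eta> where "\<eta> = c / (2 * (A + 1))"
  have \<eta>: "0 < \<eta>" using c A by (simp add: \<eta>_def)
  have A\<eta>: "A * \<eta> \<le> c / 2"
    using c A by (simp add: \<eta>_def field_simps)
  obtain r0 E where rE: "\<And>r. r \<ge> r0 \<Longrightarrow> \<bar>f r\<bar> \<le> A * \<eta> * r ^ k + E * r ^ (k - 1)"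
    using bound[OF \<eta>] by blast
  show "\<forall>\<^sub>F r in at_top. norm (f r) \<le> c * norm (r ^ k)"
  proof (rule eventually_mono[OF eventually_ge_at_top[of "max r0 (max 1 (2 * \<bar>E\<bar> / c))"]])
    fix r :: real assume r: "max r0 (max 1 (2 * \<bar>E\<bar> / c)) \<le> r"
    then have r1: "1 \<le> r" by simp
    have rk: "r ^ k = r * r ^ (k - 1)" using k by (metis One_nat_def Suc_pred le_eq_less_or_eq less_eq_Suc_le power_Suc)
    have "\<bar>E\<bar> \<le> c / 2 * r" using r c by (simp add: divide_le_eq mult.commute)
    then have "\<bar>E\<bar> * r ^ (k - 1) \<le> c / 2 * r * r ^ (k - 1)"
      using r1 by (intro mult_right_mono) auto
    moreover have "E * r ^ (k - 1) \<le> \<bar>E\<bar> * r ^ (k - 1)"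
      using r1 by (intro mult_right_mono) auto
    ultimately have "E * r ^ (k - 1) \<le> c / 2 * r ^ k" unfolding rk by (simp add: mult.assoc)
    moreover have "A * \<eta> * r ^ k \<le> c / 2 * r ^ k" using A\<eta> r1 by (intro mult_right_mono) auto
    moreover have "\<bar>f r\<bar> \<le> A * \<eta> * r ^ k + E * r ^ (k - 1)" using rE r by simp
    ultimately have "\<bar>f r\<bar> \<le> c * r ^ k" by linarith
    then show "norm (f r) \<le> c * norm (r ^ k)" using r1 by simp
  qed
qed


theorem theorem4:
  fixes p :: "nat \<Rightarrow> real ^ 'n" and N :: nat
  assumes "CARD('n) \<ge> 2" and "N \<ge> 1"
  shows "(\<lambda>r::real. measure lebesgue (\<Inter>i\<in>{1..N}. cball (p i) r)
            - (measure lebesgue (cball (0::real ^ 'n) 1) * r ^ CARD('n)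
               - mean_support (convex hull (p ` {1..N})) * r ^ (CARD('n) - 1)))
         \<in> o[at_top](\<lambda>r. r ^ (CARD('n) - 1))"
proof -
  define H where "H = (\<lambda>w::real ^ 'n. Max ((\<lambda>i. p i \<bullet> w) ` {1..N}))"
  define I where "I = (LBINT x. indicator (cball 0 1 - {0}) x * H (x /\<^sub>R norm x))"
  define \<delta> where "\<delta> = measure lebesgue (cball (0::real ^ 'n) 1)"
  have "support_fun (convex hull (p ` {1..N})) = H"
    using support_fun_convex_hull_finite[of "p ` {1..N}"] assms(2)
    by (auto simp: H_def image_image)
  then have mean: "mean_support (convex hull (p ` {1..N})) = CARD('n) * I"
    unfolding mean_support_def I_def H_def
    by (simp add: sphere_integral_as_ball_integral Max_inner_borel)
  show ?thesis
    unfolding mean \<delta>_def[symmetric]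
  proof (rule smallo_of_uniform_bounds[where A = "CARD('n) * \<delta>"])
    fix \<eta> :: real assume "0 < \<eta>"
    then show "\<exists>r0 E. \<forall>r\<ge>r0. \<bar>measure lebesgue (\<Inter>i\<in>{1..N}. cball (p i) r)
            - (\<delta> * r ^ CARD('n) - CARD('n) * I * r ^ (CARD('n) - 1))\<bar>
          \<le> CARD('n) * \<delta> * \<eta> * r ^ (CARD('n) - 1) + E * r ^ (CARD('n) - 1 - 1)"
      using ball_intersection_volume_estimate[of "{1..N}" \<eta> p] assms
      by (simp add: H_def I_def \<delta>_def mult_ac numeral_2_eq_2)
  qed (use assms(1) in \<open>auto simp: \<delta>_def\<close>)
qed

end
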